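(* Let $T$ be a DAT with duration vector $d$, let $v$ be a module of $T$, and let $T^v$, $\tilde v$, $d^v$ be as defined below. Then for every successful attack $\mathcal{O}$ on $T$ there exists a successful attack $\mathcal{O}'$ on $T^v$ with $\mathrm{t}(\mathcal{O}',d^v)\le\mathrm{t}(\mathcal{O},d)$.
   Context: A dynamic attack tree (DAT) is a finite rooted directed acyclic graph $T=(N,E)$ (edges point from a node to its children) with root $\mathrm{R}_T$, in which each node $v$ has a type $\gamma(v)\in\{\mathtt{BAS},\mathtt{OR},\mathtt{AND},\mathtt{SAND}\}$, with $\gamma(v)=\mathtt{BAS}$ if and only if $v$ is a leaf. Every node of type $\mathtt{SAND}$ comes with a fixed linear ordering $v_1,\dots,v_n$ of its children, written $v=\mathtt{SAND}(v_1,\dots,v_n)$; similarly one writes $v=\mathtt{OR}(v_1,\dots,v_n)$, $v=\mathtt{AND}(v_1,\dots,v_n)$. $N_\gamma$ denotes the set of nodes of type $\gamma$. For a node $v$, $T_v$ is the sub-DAG induced on the descendants of $v$ (all nodes reachable from $v$ by a directed path, including $v$), rooted at $v$, with the inherited types and orderings, and $B_v$ is the set of nodes of $T_v$ of type $\mathtt{BAS}$. A module of $T$ is a node $v\in N\setminus N_{\mathtt{BAS}}$ such that every directed path from a node outside $T_v$ to a node of $T_v$ passes through $v$; equivalently, every node of $T_v$ other than $v$ has all its parents inside $T_v$. An attack on $T$ is a pair $\mathcal{O}=(A,\prec)$ where $A\subseteq N_{\mathtt{BAS}}$ and $\prec$ is a strict partial order on $A$. An attack $(A,\prec)$ reaches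 a node $v$, defined recursively: if $v\in N_{\mathtt{BAS}}$, iff $v\in A$; if $v=\mathtt{OR}(v_1,\dots,v_n)$, iff it reaches some $v_i$; if $v=\mathtt{AND}(v_1,\dots,v_n)$, iff it reaches all $v_i$; if $v=\mathtt{SAND}(v_1,\dots,v_n)$, iff it reaches all $v_i$ and for every $i<n$, every $a\in A\cap B_{v_i}$ and every $a'\in A\cap B_{v_{i+1}}$ one has $a\prec a'$. An attack is successful if it reaches the root. A duration vector is $d\in\mathbb{R}_{\ge0}^{N_{\mathtt{BAS}}}$. For an attack $\mathcal{O}=(A,\prec)$, $\mathrm{t}(\mathcal{O},d)=\max_C\sum_{a\in C}d_a$, the maximum over all maximal chains $C$ of $(A,\prec)$ (equal to $0$ if $A=\varnothing$). The min time $\mathrm{mt}(T,d)$ is the minimum of $\mathrm{t}(\mathcal{O},d)$ over successful attacks $\mathcal{O}$ on $T$ ($\infty$ if there are none). For a module $v$: $T^v$ is the DAT obtained from $T$ by deleting all nodes of $T_v$ other than $v$ (with their incident edges) and turning $v$ into a new leaf $\tilde v$ of type $\mathtt{BAS}$ (keeping its incoming edges and its position in the child orderings of its $\mathtt{SAND}$-parents); $d^v$ is the duration vector on the BASes of $T^v$ given by $d^v_a=d_a$ for $a\in N_{\mathtt{BAS}}\setminus B_v$ and $d^v_{\tilde v}=\mathrm{mt}(T_v,d|_{B_v})$ (if this is $\infty$, then $\mathrm{t}(\mathcal{O},d^v)=\infty$ for any attack $\mathcal{O}$ containing $\tilde v$). *)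

theory Defs
  imports Complex_Main "HOL-Library.Extended_Real"
begin

datatype ntype = BAS | OR | AND | SAND

record 'n dat =
  nodes :: "'n set"
  rt :: 'n
  ntyp :: "'n \<Rightarrow> ntype"
  children :: "'n \<Rightarrow> 'n list"

definition edges :: "'n dat \<Rightarrow> ('n \<times> 'n) set" where
  "edges T = {(u, c). u \<in> nodes T \<and> c \<in> set (children T u)}"

definition is_DAT :: "'n dat \<Rightarrow> bool" where
  "is_DAT T \<longleftrightarrow>
     finite (nodes T) \<and> rt T \<in> nodes T \<and>
     (\<forall>u \<in> nodes T. set (children T u) \<subseteq> nodes T \<and> distinct (children T u)) \<and>
     (\<forall>u. (u, u) \<notin> (edges T)\<^sup>+) \<and>
     (\<forall>u \<in> nodes T. (rt T, u) \<in> (edges T)\<^sup>*) \<and>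
     (\<forall>u \<in> nodes T. ntyp T u = BAS \<longleftrightarrow> children T u = [])"

definition basnodes :: "'n dat \<Rightarrow> 'n set" where
  "basnodes T = {u \<in> nodes T. ntyp T u = BAS}"

definition desc :: "'n dat \<Rightarrow> 'n \<Rightarrow> 'n set" where
  "desc T v = {w. (v, w) \<in> (edges T)\<^sup>*}"

definition Bset :: "'n dat \<Rightarrow> 'n \<Rightarrow> 'n set" where
  "Bset T v = desc T v \<inter> basnodes T"

definition subdat :: "'n dat \<Rightarrow> 'n \<Rightarrow> 'n dat" where
  "subdat T v = \<lparr>nodes = desc T v, rt = v, ntyp = ntyp T, children = children T\<rparr>"

definition is_module :: "'n dat \<Rightarrow> 'n \<Rightarrow> bool" where
  "is_module T v \<longleftrightarrow> v \<in> nodes T \<and> ntyp T v \<noteq> BAS \<and>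
     (\<forall>u \<in> desc T v - {v}. \<forall>p \<in> nodes T. u \<in> set (children T p) \<longrightarrow> p \<in> desc T v)"

text \<open>T^v: delete all proper descendants of v and make v itself a leaf of type BAS
  (the new leaf \<open>\<tilde>v\<close> is represented by the node v itself).\<close>
definition contract :: "'n dat \<Rightarrow> 'n \<Rightarrow> 'n dat" where
  "contract T v = \<lparr>nodes = nodes T - (desc T v - {v}), rt = rt T,
                    ntyp = (ntyp T)(v := BAS), children = (children T)(v := [])\<rparr>"

definition is_attack :: "'n dat \<Rightarrow> 'n set \<Rightarrow> ('n \<times> 'n) set \<Rightarrow> bool" where
  "is_attack T A P \<longleftrightarrow> A \<subseteq> basnodes T \<and> P \<subseteq> A \<times> A \<and>
     (\<forall>a. (a, a) \<notin> P) \<and> trans P"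

inductive reaches :: "'n dat \<Rightarrow> 'n set \<Rightarrow> ('n \<times> 'n) set \<Rightarrow> 'n \<Rightarrow> bool"
  for T A P where
  r_bas: "v \<in> nodes T \<Longrightarrow> ntyp T v = BAS \<Longrightarrow> v \<in> A \<Longrightarrow> reaches T A P v"
| r_or: "v \<in> nodes T \<Longrightarrow> ntyp T v = OR \<Longrightarrow> c \<in> set (children T v) \<Longrightarrow>
          reaches T A P c \<Longrightarrow> reaches T A P v"
| r_and: "v \<in> nodes T \<Longrightarrow> ntyp T v = AND \<Longrightarrow>
          (\<forall>c. c \<in> set (children T v) \<longrightarrow> reaches T A P c) \<Longrightarrow> reaches T A P v"
| r_sand: "v \<in> nodes T \<Longrightarrow> ntyp T v = SAND \<Longrightarrow>
          (\<forall>c. c \<in> set (children T v) \<longrightarrow> reaches T A P c) \<Longrightarrow>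
          (\<forall>i. Suc i < length (children T v) \<longrightarrow>
              (\<forall>a \<in> A \<inter> Bset T (children T v ! i).
                 \<forall>a' \<in> A \<inter> Bset T (children T v ! Suc i). (a, a') \<in> P)) \<Longrightarrow>
          reaches T A P v"

definition successful :: "'n dat \<Rightarrow> 'n set \<Rightarrow> ('n \<times> 'n) set \<Rightarrow> bool" where
  "successful T A P \<longleftrightarrow> reaches T A P (rt T)"

definition is_chain :: "'n set \<Rightarrow> ('n \<times> 'n) set \<Rightarrow> 'n set \<Rightarrow> bool" where
  "is_chain A P C \<longleftrightarrow> C \<subseteq> A \<and> (\<forall>x \<in> C. \<forall>y \<in> C. x \<noteq> y \<longrightarrow> (x, y) \<in> P \<or> (y, x) \<in> P)"

definition maximal_chain :: "'n set \<Rightarrow> ('n \<times> 'n) set \<Rightarrow> 'n set \<Rightarrow> bool" where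
  "maximal_chain A P C \<longleftrightarrow> is_chain A P C \<and> (\<forall>C'. is_chain A P C' \<and> C \<subseteq> C' \<longrightarrow> C' = C)"

text \<open>Attack time t(O,d): maximum over maximal chains of the summed durations
  (durations are extended reals, to allow the value \<infinity> for the contracted node).\<close>
definition attack_time :: "'n set \<Rightarrow> ('n \<times> 'n) set \<Rightarrow> ('n \<Rightarrow> ereal) \<Rightarrow> ereal" where
  "attack_time A P d = Sup {sum d C | C. maximal_chain A P C}"

text \<open>Min time mt(T,d); Inf of the empty set is \<infinity>.\<close>
definition min_time :: "'n dat \<Rightarrow> ('n \<Rightarrow> ereal) \<Rightarrow> ereal" where
  "min_time T d = Inf {attack_time A P d | A P. is_attack T A P \<and> successful T A P}"

definition contract_dur :: "'n dat \<Rightarrow> 'n \<Rightarrow> ('n \<Rightarrow> real) \<Rightarrow> 'n \<Rightarrow> ereal" where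
  "contract_dur T v d = (\<lambda>a. if a = v
       then min_time (subdat T v) (\<lambda>b. if b \<in> Bset T v then ereal (d b) else 0)
       else ereal (d a))"

end

theory Submission
  imports Defs
begin

text \<open>Replace the BASes of the attack below the module \<open>v\<close> by the single new leaf \<open>v\<close>,
  present iff the attack reaches \<open>v\<close>, and let the new leaf precede (follow) a remaining BAS
  exactly when every BAS of \<open>A \<inter> B\<^sub>v\<close> does. Since \<open>v\<close> is a module, nodes outside
  \<open>T\<^sub>v\<close> see the attack only through \<open>v\<close>, so the new attack is still successful. A maximal
  chain through the new leaf becomes a chain of the original attack once the leaf is replaced by a
  maximal chain of the restriction of the attack to \<open>T\<^sub>v\<close>, whose duration is at least
  \<open>mt(T\<^sub>v, d)\<close>; extending it to a maximal chain (durations are nonnegative) bounds the new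
  attack time by the old one.\<close>

lemma desc_refl: "v \<in> desc T v"
  by (simp add: desc_def)

lemma desc_trans: "w \<in> desc T u \<Longrightarrow> x \<in> desc T w \<Longrightarrow> x \<in> desc T u"
  unfolding desc_def by simp

lemma child_in_desc: "u \<in> nodes T \<Longrightarrow> c \<in> set (children T u) \<Longrightarrow> c \<in> desc T u"
  unfolding desc_def edges_def by blast

lemma child_in_desc_of_desc:
  "u \<in> nodes T \<Longrightarrow> c \<in> set (children T u) \<Longrightarrow> u \<in> desc T v \<Longrightarrow> c \<in> desc T v"
  using child_in_desc desc_trans by metis

lemma Bset_mono: "w \<in> desc T u \<Longrightarrow> Bset T w \<subseteq> Bset T u"
  unfolding Bset_def using desc_trans[of w T u] by blast

lemma desc_mono_edges: "edges T' \<subseteq> edges T \<Longrightarrow> desc T' u \<subseteq> desc T u"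
  unfolding desc_def by (auto dest: rtrancl_mono)

lemma desc_subset_nodes:
  assumes "is_DAT T" "v \<in> nodes T"
  shows "desc T v \<subseteq> nodes T"
proof
  fix w assume "w \<in> desc T v"
  then have "(v, w) \<in> (edges T)\<^sup>*" by (simp add: desc_def)
  then show "w \<in> nodes T"
    by induction (use assms in \<open>auto simp: is_DAT_def edges_def\<close>)
qed

lemma children_nonempty: "is_DAT T \<Longrightarrow> u \<in> nodes T \<Longrightarrow> ntyp T u \<noteq> BAS \<Longrightarrow> children T u \<noteq> []"
  unfolding is_DAT_def by blast

lemma reaches_Bset_nonempty:
  assumes "is_DAT T"
  shows "reaches T A P u \<Longrightarrow> A \<inter> Bset T u \<noteq> {}"
proof (induction rule: reaches.induct)
  case (r_bas u)
  then show ?case by (auto simp: Bset_def basnodes_def desc_refl)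
next
  case (r_or u c)
  then show ?case using Bset_mono[OF child_in_desc[OF r_or(1,3)]] by blast
next
  case (r_and u)
  then have "hd (children T u) \<in> set (children T u)"
    using children_nonempty[OF assms] by simp
  then show ?case using r_and Bset_mono[OF child_in_desc[OF r_and(1)]] by blast
next
  case (r_sand u)
  then have "hd (children T u) \<in> set (children T u)"
    using children_nonempty[OF assms] by simp
  then show ?case using r_sand Bset_mono[OF child_in_desc[OF r_sand(1)]] by blast
qed

section \<open>Restriction of an attack to a sub-DAT\<close>

lemma subdat_simps [simp]:
  "nodes (subdat T v) = desc T v" "rt (subdat T v) = v"
  "ntyp (subdat T v) = ntyp T" "children (subdat T v) = children T"
  by (simp_all add: subdat_def)

lemma Bset_subdat_subset:
  assumes "is_DAT T" "v \<in> nodes T"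
  shows "Bset (subdat T v) c \<subseteq> Bset T c"
proof -
  have "edges (subdat T v) \<subseteq> edges T"
    using desc_subset_nodes[OF assms] by (auto simp: edges_def)
  then have "desc (subdat T v) c \<subseteq> desc T c" by (rule desc_mono_edges)
  then show ?thesis using desc_subset_nodes[OF assms] by (auto simp: Bset_def basnodes_def)
qed

lemma is_attack_restrict:
  "is_attack T A P \<Longrightarrow> A' \<subseteq> A \<Longrightarrow> A' \<subseteq> basnodes T' \<Longrightarrow> is_attack T' A' (P \<inter> A' \<times> A')"
  unfolding is_attack_def trans_def by blast

lemma reaches_subdat:
  fixes A :: "'n set"
  assumes "is_DAT T" "v \<in> nodes T"
  defines "Av \<equiv> A \<inter> Bset T v"
  shows "reaches T A P u \<Longrightarrow> u \<in> desc T v \<Longrightarrow> reaches (subdat T v) Av (P \<inter> Av \<times> Av) u"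
proof (induction rule: reaches.induct)
  case (r_bas u)
  show ?case by (rule reaches.r_bas) (use r_bas in \<open>auto simp: Av_def Bset_def basnodes_def\<close>)
next
  case (r_or u c)
  have "c \<in> desc T v" using child_in_desc_of_desc[OF r_or(1,3) r_or.prems] .
  show ?case by (rule reaches.r_or[where c = c]) (use r_or \<open>c \<in> desc T v\<close> in auto)
next
  case (r_and u)
  have below: "\<forall>c \<in> set (children T u). c \<in> desc T v"
    using child_in_desc_of_desc[OF r_and(1) _ r_and.prems] by blast
  show ?case by (rule reaches.r_and) (use r_and below in auto)
next
  case (r_sand u)
  have below: "\<forall>c \<in> set (children T u). c \<in> desc T v"
    using child_in_desc_of_desc[OF r_sand(1) _ r_sand.prems] by blast
  have ordered: "(a, a') \<in> P \<inter> Av \<times> Av"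
    if "Suc i < length (children T u)" "a \<in> Av \<inter> Bset (subdat T v) (children T u ! i)"
      "a' \<in> Av \<inter> Bset (subdat T v) (children T u ! Suc i)" for i a a'
    using that r_sand.hyps(3) Bset_subdat_subset[OF assms(1,2)] unfolding Av_def by blast
  show ?case by (rule reaches.r_sand) (use r_sand below ordered in auto)
qed

section \<open>Orders lifted along blocks\<close>

definition lift_order :: "('a \<Rightarrow> 'b set) \<Rightarrow> 'a set \<Rightarrow> ('b \<times> 'b) set \<Rightarrow> ('a \<times> 'a) set" where
  "lift_order blk X P = {(x, y). x \<in> X \<and> y \<in> X \<and> (\<forall>a \<in> blk x. \<forall>b \<in> blk y. (a, b) \<in> P)}"

lemma lift_order_irrefl:
  "\<forall>x \<in> X. blk x \<noteq> {} \<Longrightarrow> \<forall>a. (a, a) \<notin> P \<Longrightarrow> (x, x) \<notin> lift_order blk X P"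
  unfolding lift_order_def by blast

lemma lift_order_trans:
  assumes "\<forall>x \<in> X. blk x \<noteq> {}" "trans P"
  shows "trans (lift_order blk X P)"
proof (rule transI)
  fix x y z assume xy: "(x, y) \<in> lift_order blk X P" and yz: "(y, z) \<in> lift_order blk X P"
  then obtain b where "b \<in> blk y" using assms(1) unfolding lift_order_def by blast
  with xy yz assms(2) show "(x, z) \<in> lift_order blk X P"
    unfolding lift_order_def by (blast dest: transD)
qed

lemma lift_order_chain_Union:
  assumes "is_chain X (lift_order blk X P) C"
    and "\<forall>x \<in> C. K x \<subseteq> blk x \<and> is_chain A P (K x)"
  shows "is_chain A P (\<Union>x \<in> C. K x)"
  unfolding is_chain_def
proof (intro conjI ballI impI)
  show "(\<Union>x \<in> C. K x) \<subseteq> A" using assms(2) unfolding is_chain_def by blast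
  fix a b assume "a \<in> (\<Union>x \<in> C. K x)" "b \<in> (\<Union>x \<in> C. K x)" "a \<noteq> b"
  then obtain x y where xy: "x \<in> C" "y \<in> C" "a \<in> K x" "b \<in> K y" by blast
  show "(a, b) \<in> P \<or> (b, a) \<in> P"
  proof (cases "x = y")
    case True
    then show ?thesis using xy assms(2) \<open>a \<noteq> b\<close> unfolding is_chain_def by blast
  next
    case False
    then have "(x, y) \<in> lift_order blk X P \<or> (y, x) \<in> lift_order blk X P"
      using xy assms(1) unfolding is_chain_def by blast
    then show ?thesis using xy assms(2) unfolding lift_order_def by blast
  qed
qed

lemma lift_order_chain_disjoint:
  assumes "is_chain X (lift_order blk X P) C" "\<forall>x \<in> C. K x \<subseteq> blk x" "\<forall>a. (a, a) \<notin> P"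
    and "x \<in> C" "y \<in> C" "x \<noteq> y"
  shows "K x \<inter> K y = {}"
  using assms unfolding is_chain_def lift_order_def by blast

section \<open>Maximal chains and attack times\<close>

lemma chain_extends_to_maximal:
  assumes "finite A"
  shows "is_chain A P C \<Longrightarrow> \<exists>C'. maximal_chain A P C' \<and> C \<subseteq> C'"
proof (induction "card (A - C)" arbitrary: C rule: less_induct)
  case less
  show ?case
  proof (cases "maximal_chain A P C")
    case False
    then obtain C' where C': "is_chain A P C'" "C \<subseteq> C'" "C' \<noteq> C"
      using less.prems unfolding maximal_chain_def by blast
    moreover have "C' \<subseteq> A" using C'(1) unfolding is_chain_def by blast
    ultimately have "A - C' \<subset> A - C" by blast
    then have "card (A - C') < card (A - C)" using assms by (meson finite_Diff psubset_card_mono)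
    from less.hyps[OF this C'(1)] obtain C'' where "maximal_chain A P C''" "C' \<subseteq> C''"
      by blast
    with C'(2) show ?thesis by blast
  qed blast
qed

lemma chain_sum_le_maximal_chain:
  fixes f :: "'n \<Rightarrow> ereal"
  assumes "finite A" "\<forall>a \<in> A. 0 \<le> f a" "is_chain A P C"
  shows "\<exists>C'. maximal_chain A P C' \<and> sum f C \<le> sum f C'"
proof -
  obtain C' where C': "maximal_chain A P C'" "C \<subseteq> C'"
    using chain_extends_to_maximal[OF assms(1,3)] by blast
  then have "C' \<subseteq> A" unfolding maximal_chain_def is_chain_def by blast
  moreover from this have "finite C'" using assms(1) by (rule finite_subset)
  ultimately have "sum f C \<le> sum f C'"
    using assms(2) C'(2) by (intro sum_mono2) auto
  with C'(1) show ?thesis by blast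
qed

lemma attack_time_le_by_chains:
  assumes "\<And>C'. maximal_chain A' P' C' \<Longrightarrow> \<exists>C. maximal_chain A P C \<and> sum f C' \<le> sum g C"
  shows "attack_time A' P' f \<le> attack_time A P g"
  unfolding attack_time_def
proof (rule Sup_least)
  fix x assume "x \<in> {sum f C' |C'. maximal_chain A' P' C'}"
  then obtain C' C where "x = sum f C'" "maximal_chain A P C" "sum f C' \<le> sum g C"
    using assms by blast
  then show "x \<le> Sup {sum g C |C. maximal_chain A P C}"
    by (intro Sup_upper2[of "sum g C"]) auto
qed

lemma attack_time_attained:
  fixes f :: "'n \<Rightarrow> ereal"
  assumes "finite A"
  shows "\<exists>C. maximal_chain A P C \<and> attack_time A P f = sum f C"
proof -
  let ?S = "{sum f C |C. maximal_chain A P C}"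
  have "?S \<subseteq> sum f ` Pow A" unfolding maximal_chain_def is_chain_def by auto
  then have fin: "finite ?S" using assms by (meson finite_Pow_iff finite_imageI finite_subset)
  have "is_chain A P {}" unfolding is_chain_def by auto
  then have ne: "?S \<noteq> {}" using chain_extends_to_maximal[OF assms] by blast
  have "Sup ?S = Max ?S" using cSup_eq_Max[OF fin ne] .
  then have "Sup ?S \<in> ?S" using Max_in[OF fin ne] by simp
  then show ?thesis unfolding attack_time_def by auto
qed

section \<open>The contracted attack\<close>

definition module_block :: "'n dat \<Rightarrow> 'n \<Rightarrow> 'n set \<Rightarrow> 'n \<Rightarrow> 'n set" where
  "module_block T v A x = (if x = v then A \<inter> Bset T v else {x})"

definition contract_set :: "'n dat \<Rightarrow> 'n \<Rightarrow> 'n set \<Rightarrow> ('n \<times> 'n) set \<Rightarrow> 'n set" where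
  "contract_set T v A P = (A - Bset T v) \<union> {x. x = v \<and> reaches T A P v}"

definition contract_order :: "'n dat \<Rightarrow> 'n \<Rightarrow> 'n set \<Rightarrow> ('n \<times> 'n) set \<Rightarrow> ('n \<times> 'n) set" where
  "contract_order T v A P = lift_order (module_block T v A) (contract_set T v A P) P"

lemma contract_simps [simp]:
  "nodes (contract T v) = nodes T - (desc T v - {v})" "rt (contract T v) = rt T"
  "ntyp (contract T v) = (ntyp T)(v := BAS)" "children (contract T v) = (children T)(v := [])"
  by (simp_all add: contract_def)

lemma Bset_contract_subset: "Bset (contract T v) c \<subseteq> desc T c"
proof -
  have "edges (contract T v) \<subseteq> edges T" by (auto simp: edges_def split: if_splits)
  then have "desc (contract T v) c \<subseteq> desc T c" by (rule desc_mono_edges)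
  then show ?thesis unfolding Bset_def by blast
qed

lemma rt_in_contract:
  assumes "is_DAT T" "v \<in> nodes T"
  shows "rt T \<in> nodes (contract T v)"
proof (rule ccontr)
  assume "rt T \<notin> nodes (contract T v)"
  then have "(v, rt T) \<in> (edges T)\<^sup>+"
    using assms(1) by (auto simp: is_DAT_def desc_def rtrancl_eq_or_trancl)
  moreover have "(rt T, v) \<in> (edges T)\<^sup>*" using assms unfolding is_DAT_def by blast
  ultimately have "(v, v) \<in> (edges T)\<^sup>+" by (rule trancl_rtrancl_trancl)
  then show False using assms(1) unfolding is_DAT_def by blast
qed

lemma contract_child_in_nodes:
  assumes "is_DAT T" "is_module T v"
    and "u \<in> nodes (contract T v)" "u \<noteq> v" "c \<in> set (children T u)"
  shows "c \<in> nodes (contract T v)"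
proof -
  have u: "u \<in> nodes T" "u \<notin> desc T v" using assms(3,4) by auto
  then have "c \<in> nodes T" using assms(1,5) unfolding is_DAT_def by blast
  moreover have "c \<notin> desc T v - {v}"
    using assms(2,5) u unfolding is_module_def by blast
  ultimately show ?thesis by simp
qed

lemma attack_finite: "is_DAT T \<Longrightarrow> is_attack T A P \<Longrightarrow> finite A"
  unfolding is_DAT_def is_attack_def basnodes_def by (blast intro: finite_subset)

lemma module_not_in_attack: "is_module T v \<Longrightarrow> is_attack T A P \<Longrightarrow> v \<notin> A"
  unfolding is_module_def is_attack_def basnodes_def by blast

lemma contract_set_subset: "contract_set T v A P \<subseteq> insert v A"
  unfolding contract_set_def by blast

lemma module_block_nonempty:
  assumes "is_module T v" "is_attack T A P" "is_DAT T" "x \<in> contract_set T v A P"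
  shows "module_block T v A x \<noteq> {}"
proof (cases "x = v")
  case True
  then have "reaches T A P v"
    using assms(4) module_not_in_attack[OF assms(1,2)] by (simp add: contract_set_def)
  with True show ?thesis using reaches_Bset_nonempty[OF assms(3)] by (simp add: module_block_def)
qed (simp add: module_block_def)

lemma is_attack_contract:
  assumes "is_DAT T" "is_module T v" "is_attack T A P"
  shows "is_attack (contract T v) (contract_set T v A P) (contract_order T v A P)"
  unfolding is_attack_def contract_order_def
proof (intro conjI)
  have "v \<in> nodes T" using assms(2) unfolding is_module_def by blast
  then show "contract_set T v A P \<subseteq> basnodes (contract T v)"
    using assms(3) desc_refl[of v T]
    by (auto simp: contract_set_def is_attack_def basnodes_def Bset_def)
  show "lift_order (module_block T v A) (contract_set T v A P) P
      \<subseteq> contract_set T v A P \<times> contract_set T v A P"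
    unfolding lift_order_def by blast
  have blocks: "\<forall>x \<in> contract_set T v A P. module_block T v A x \<noteq> {}"
    using module_block_nonempty[OF assms(2,3,1)] by blast
  have "\<forall>a. (a, a) \<notin> P" "trans P" using assms(3) unfolding is_attack_def by blast+
  then show "\<forall>a. (a, a) \<notin> lift_order (module_block T v A) (contract_set T v A P) P"
    and "trans (lift_order (module_block T v A) (contract_set T v A P) P)"
    using lift_order_irrefl[OF blocks] lift_order_trans[OF blocks] by blast+
qed

lemma module_block_subset_Bset:
  assumes "is_attack T A P" "x \<in> contract_set T v A P" "x \<in> Bset (contract T v) c"
  shows "module_block T v A x \<subseteq> A \<inter> Bset T c"
proof (cases "x = v")
  case True
  then show ?thesis
    using assms(3) Bset_contract_subset Bset_mono by (fastforce simp: module_block_def)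
next
  case False
  then show ?thesis using assms Bset_contract_subset
    by (fastforce simp: module_block_def contract_set_def is_attack_def Bset_def)
qed

lemma reaches_contract_new_leaf:
  "v \<in> nodes T \<Longrightarrow> reaches T A P v \<Longrightarrow> reaches (contract T v) (contract_set T v A P) P' v"
  by (rule reaches.r_bas) (auto simp: contract_set_def desc_refl)

lemma contract_order_siblings:
  assumes "is_attack T A P" and "\<forall>x \<in> A \<inter> Bset T c. \<forall>y \<in> A \<inter> Bset T c'. (x, y) \<in> P"
    and "a \<in> contract_set T v A P \<inter> Bset (contract T v) c"
    and "a' \<in> contract_set T v A P \<inter> Bset (contract T v) c'"
  shows "(a, a') \<in> contract_order T v A P"
proof -
  have "module_block T v A a \<subseteq> A \<inter> Bset T c" "module_block T v A a' \<subseteq> A \<inter> Bset T c'"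
    using module_block_subset_Bset[OF assms(1)] assms(3,4) by blast+
  with assms show ?thesis unfolding contract_order_def lift_order_def by blast
qed

lemma reaches_contract:
  assumes DAT: "is_DAT T" and mod: "is_module T v" and att: "is_attack T A P"
  defines "A' \<equiv> contract_set T v A P" and "P' \<equiv> contract_order T v A P"
  shows "reaches T A P u \<Longrightarrow> u \<in> nodes (contract T v) \<Longrightarrow> reaches (contract T v) A' P' u"
proof (induction rule: reaches.induct)
  have "v \<in> nodes T" using mod unfolding is_module_def by blast
  note reaches_v = reaches_contract_new_leaf[OF this, of A P P', folded A'_def]
  have child: "c \<in> nodes (contract T v)"
    if "u \<in> nodes (contract T v)" "u \<noteq> v" "c \<in> set (children T u)" for u c
    using contract_child_in_nodes[OF DAT mod that] .
  {
    case (r_bas u)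
    then have "u \<noteq> v" using mod unfolding is_module_def by blast
    show ?case
      by (rule reaches.r_bas) (use r_bas \<open>u \<noteq> v\<close> in \<open>auto simp: A'_def contract_set_def Bset_def\<close>)
  next
    case (r_or u c)
    show ?case
    proof (cases "u = v")
      case True
      have "reaches T A P u" by (rule reaches.r_or[where c = c]) (use r_or in auto)
      with True reaches_v show ?thesis by blast
    next
      case False
      then have reach_c: "reaches (contract T v) A' P' c"
        using r_or.IH child[OF r_or.prems False r_or(3)] by blast
      show ?thesis by (rule reaches.r_or[where c = c]) (use r_or False reach_c in auto)
    qed
  next
    case (r_and u)
    show ?case
    proof (cases "u = v")
      case True
      have "reaches T A P u" by (rule reaches.r_and) (use r_and in auto)
      with True reaches_v show ?thesis by blast
    next
      case False
      then have below: "\<forall>c \<in> set (children T u). reaches (contract T v) A' P' c"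
        using r_and child[OF r_and.prems False] by blast
      show ?thesis by (rule reaches.r_and) (use r_and False below in auto)
    qed
  next
    case (r_sand u)
    show ?case
    proof (cases "u = v")
      case True
      have "reaches T A P u" by (rule reaches.r_sand) (use r_sand in auto)
      with True reaches_v show ?thesis by blast
    next
      case False
      then have below: "\<forall>c \<in> set (children T u). reaches (contract T v) A' P' c"
        using r_sand child[OF r_sand.prems False] by blast
      have ordered: "(a, a') \<in> P'"
        if "Suc i < length (children T u)" "a \<in> A' \<inter> Bset (contract T v) (children T u ! i)"
          "a' \<in> A' \<inter> Bset (contract T v) (children T u ! Suc i)" for i a a'
        using contract_order_siblings[OF att] r_sand.hyps(3) that unfolding A'_def P'_def by blast
      show ?thesis by (rule reaches.r_sand) (use r_sand False below ordered in auto)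
    qed
  }
qed

lemma contract_dur_le_block_chain:
  assumes DAT: "is_DAT T" and mod: "is_module T v" and att: "is_attack T A P"
    and x: "x \<in> contract_set T v A P"
  shows "\<exists>K. K \<subseteq> module_block T v A x \<and> is_chain A P K \<and>
           contract_dur T v d x \<le> sum (\<lambda>a. ereal (d a)) K"
proof (cases "x = v")
  case False
  with x have "x \<in> A" by (auto simp: contract_set_def)
  with False show ?thesis
    by (intro exI[of _ "{x}"]) (auto simp: module_block_def is_chain_def contract_dur_def)
next
  case True
  let ?Av = "A \<inter> Bset T v" and ?dv = "\<lambda>b. if b \<in> Bset T v then ereal (d b) else 0"
  have v: "v \<in> nodes T" using mod unfolding is_module_def by blast
  obtain Cv where Cv: "maximal_chain ?Av (P \<inter> ?Av \<times> ?Av) Cv"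
      "attack_time ?Av (P \<inter> ?Av \<times> ?Av) ?dv = sum ?dv Cv"
    using attack_time_attained attack_finite[OF DAT att] by blast
  have "reaches T A P v"
    using x True module_not_in_attack[OF mod att] by (simp add: contract_set_def)
  then have "successful (subdat T v) ?Av (P \<inter> ?Av \<times> ?Av)"
    unfolding successful_def using reaches_subdat[OF DAT v _ desc_refl] by simp
  moreover have "is_attack (subdat T v) ?Av (P \<inter> ?Av \<times> ?Av)"
    using att by (rule is_attack_restrict) (auto simp: Bset_def basnodes_def)
  ultimately have "min_time (subdat T v) ?dv \<le> sum ?dv Cv"
    unfolding min_time_def Cv(2)[symmetric] by (intro Inf_lower) blast
  moreover have "Cv \<subseteq> ?Av" "is_chain A P Cv"
    using Cv(1) unfolding maximal_chain_def is_chain_def by blast+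
  moreover have "sum ?dv Cv = sum (\<lambda>a. ereal (d a)) Cv"
    using \<open>Cv \<subseteq> ?Av\<close> by (intro sum.cong) auto
  ultimately show ?thesis using True
    by (intro exI[of _ Cv]) (simp add: module_block_def contract_dur_def)
qed

lemma attack_time_contract_le:
  assumes DAT: "is_DAT T" and nonneg: "\<forall>a \<in> basnodes T. d a \<ge> 0"
    and mod: "is_module T v" and att: "is_attack T A P"
  defines "A' \<equiv> contract_set T v A P" and "e \<equiv> \<lambda>a. ereal (d a)"
  shows "attack_time A' (contract_order T v A P) (contract_dur T v d) \<le> attack_time A P e"
proof (rule attack_time_le_by_chains)
  fix C' assume C': "maximal_chain A' (contract_order T v A P) C'"
  have "\<forall>x \<in> A'. \<exists>K. K \<subseteq> module_block T v A x \<and> is_chain A P K \<and>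
      contract_dur T v d x \<le> sum e K"
    unfolding A'_def e_def by (intro ballI contract_dur_le_block_chain[OF DAT mod att])
  then obtain K where K: "\<forall>x \<in> A'. K x \<subseteq> module_block T v A x \<and> is_chain A P (K x) \<and>
      contract_dur T v d x \<le> sum e (K x)"
    by (rule bchoice[THEN exE])
  have finA: "finite A" using attack_finite[OF DAT att] .
  from C' have "is_chain A' (contract_order T v A P) C'" by (simp add: maximal_chain_def)
  then have chain: "is_chain A' (lift_order (module_block T v A) A' P) C'"
    unfolding contract_order_def A'_def .
  then have "C' \<subseteq> A'" by (simp add: is_chain_def)
  have KA: "K x \<subseteq> A" if "x \<in> C'" for x
    using K \<open>C' \<subseteq> A'\<close> that unfolding is_chain_def by blast
  have "C' \<subseteq> insert v A" using \<open>C' \<subseteq> A'\<close> contract_set_subset[of T v A P] unfolding A'_def by blast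
  then have finC': "finite C'" using finA finite_subset by blast
  have finK: "\<forall>x \<in> C'. finite (K x)" using KA finA finite_subset by blast
  have irr: "\<forall>a. (a, a) \<notin> P" using att unfolding is_attack_def by blast
  have "\<forall>x \<in> C'. K x \<subseteq> module_block T v A x" using K \<open>C' \<subseteq> A'\<close> by blast
  then have disjoint: "\<forall>x \<in> C'. \<forall>y \<in> C'. x \<noteq> y \<longrightarrow> K x \<inter> K y = {}"
    using lift_order_chain_disjoint[OF chain _ irr] by blast
  have "sum (contract_dur T v d) C' \<le> (\<Sum>x \<in> C'. sum e (K x))"
    using K \<open>C' \<subseteq> A'\<close> by (intro sum_mono) blast
  also have "\<dots> = sum e (\<Union>x \<in> C'. K x)"
    by (rule sum.UNION_disjoint[OF finC' finK disjoint, symmetric])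
  finally have le: "sum (contract_dur T v d) C' \<le> sum e (\<Union>x \<in> C'. K x)" .
  have "is_chain A P (\<Union>x \<in> C'. K x)"
    using lift_order_chain_Union[OF chain] K \<open>C' \<subseteq> A'\<close> by blast
  moreover have "\<forall>a \<in> A. 0 \<le> e a"
    using nonneg att unfolding e_def is_attack_def by auto
  ultimately obtain C where "maximal_chain A P C" "sum e (\<Union>x \<in> C'. K x) \<le> sum e C"
    using chain_sum_le_maximal_chain[OF finA] by blast
  with le show "\<exists>C. maximal_chain A P C \<and> sum (contract_dur T v d) C' \<le> sum e C"
    using order_trans by blast
qed

theorem mainTheorem11:
  fixes T :: "'n dat" and d :: "'n \<Rightarrow> real" and v :: 'n
    and A :: "'n set" and P :: "('n \<times> 'n) set"
  assumes "is_DAT T"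
    and "\<forall>a \<in> basnodes T. d a \<ge> 0"
    and "is_module T v"
    and "is_attack T A P" and "successful T A P"
  shows "\<exists>A' P'. is_attack (contract T v) A' P' \<and> successful (contract T v) A' P' \<and>
           attack_time A' P' (contract_dur T v d) \<le> attack_time A P (\<lambda>a. ereal (d a))"
proof (intro exI conjI)
  show "is_attack (contract T v) (contract_set T v A P) (contract_order T v A P)"
    using is_attack_contract[OF assms(1,3,4)] .
  have "v \<in> nodes T" using assms(3) unfolding is_module_def by blast
  then show "successful (contract T v) (contract_set T v A P) (contract_order T v A P)"
    using reaches_contract[OF assms(1,3,4)] rt_in_contract[OF assms(1)] assms(5)
    unfolding successful_def by simp
  show "attack_time (contract_set T v A P) (contract_order T v A P) (contract_dur T v d)
      \<le> attack_time A P (\<lambda>a. ereal (d a))"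
    using attack_time_contract_le[OF assms(1-4)] .
qed

end
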